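(* Let $E$ be an Adams connected, strictly unital $A_\infty$-algebra (with Adams grading), whose unit spans the summand $k=E^0_0$. (a) If $E\cong k\oplus E^1_{-1}\oplus(E^2_{-3}\oplus E^2_{-4})\oplus E^3_{-6}\oplus E^4_{-7}$ as a $\mathbb{Z}^2$-graded vector space, then $m_n=0$ for $n\ne2,3,4$. (b) If $E\cong k\oplus E^1_{-1}\oplus(E^2_{-2}\oplus E^2_{-3})\oplus E^3_{-4}\oplus E^4_{-5}$, then $m_n=0$ for $n\neq2,3$. (c) If $E\cong k\oplus E^1_{-1}\oplus E^2_{-2}\oplus E^3_{-3}\oplus E^4_{-4}$, then $m_n=0$ for $n\ne2$.
   Context: An $A_\infty$-algebra with Adams grading over a field $k$ is a bigraded vector space $E=\bigoplus_{p\in\mathbb{Z},i\in\mathbb{Z}}E^p_i$ with $k$-linear maps $m_n:E^{\otimes n}\to E$ ($n\ge1$) of bidegree $(2-n,0)$ satisfying, for all $n\ge1$, the Stasheff identities $\sum(-1)^{r+st}m_{r+1+t}(\mathrm{id}^{\otimes r}\otimes m_s\otimes\mathrm{id}^{\otimes t})=0$, the sum over $n=r+s+t$ with $r,t\ge0$, $s\ge1$ (Koszul sign rule applies on elements). It is strictly unital if it has an element $1$ that is a unit for $m_2$ and $m_n(a_1,\dots,a_n)=0$ for $n\neq2$ whenever some $a_i=1$. Writing $E_i=\bigoplus_pE^p_i$, $E$ is Adams connected if $E_0=k$, either $E=\bigoplus_{i\ge0}E_i$ or $E=\bigoplus_{i\le0}E_i$, and each $E_i$ is finite-dimensional. *)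

theory Defs
  imports Main "HOL.Vector_Spaces"
begin

text \<open>A bigraded vector space over a field 'k: the ambient vector space 'v (with scalar
multiplication scale) is the internal direct sum of the subspaces Egr p i = E^p_i
(p cohomological degree, i Adams degree).\<close>
definition bigraded_vs :: "('k::field \<Rightarrow> 'v::ab_group_add \<Rightarrow> 'v) \<Rightarrow> (int \<Rightarrow> int \<Rightarrow> 'v set) \<Rightarrow> bool" where
  "bigraded_vs scale Egr \<longleftrightarrow>
     vector_space scale \<and>
     (\<forall>p i. module.subspace scale (Egr p i)) \<and>
     (\<forall>v. \<exists>!c :: int \<times> int \<Rightarrow> 'v.
            finite {d. c d \<noteq> 0} \<and> (\<forall>d. c d \<in> Egr (fst d) (snd d)) \<and>
            v = sum c {d. c d \<noteq> 0})"

definition homog :: "(int \<Rightarrow> int \<Rightarrow> 'v set) \<Rightarrow> (int \<times> int) list \<Rightarrow> 'v list \<Rightarrow> bool" where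
  "homog Egr ds as \<longleftrightarrow> length ds = length as \<and>
     (\<forall>j < length as. as ! j \<in> Egr (fst (ds ! j)) (snd (ds ! j)))"

definition par_sign :: "int \<Rightarrow> 'k::field" where
  "par_sign e = (if even e then 1 else -1)"

text \<open>An A-infinity algebra with Adams grading: m n is the operation m_n, applied to lists
of length n (values on other lists are irrelevant); it is k-multilinear, of bidegree
(2-n,0), and satisfies the Stasheff identities on homogeneous elements, with the Koszul
sign rule for the cohomological degree p (|m_s| = 2 - s).\<close>
definition Ainf_algebra :: "('k::field \<Rightarrow> 'v::ab_group_add \<Rightarrow> 'v) \<Rightarrow> (int \<Rightarrow> int \<Rightarrow> 'v set)
     \<Rightarrow> (nat \<Rightarrow> 'v list \<Rightarrow> 'v) \<Rightarrow> bool" where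
  "Ainf_algebra scale Egr m \<longleftrightarrow>
     bigraded_vs scale Egr \<and>
     (\<forall>n \<ge> 1. \<forall>as j. length as = n \<and> j < n \<longrightarrow>
        Vector_Spaces.linear scale scale (\<lambda>x. m n (as[j := x]))) \<and>
     (\<forall>n \<ge> 1. \<forall>ds as. homog Egr ds as \<and> length as = n \<longrightarrow>
        m n as \<in> Egr (sum_list (map fst ds) + 2 - int n) (sum_list (map snd ds))) \<and>
     (\<forall>n \<ge> 1. \<forall>ds as. homog Egr ds as \<and> length as = n \<longrightarrow>
        (\<Sum>r\<le>n. \<Sum>s\<in>{1..n - r}.
           scale (par_sign (int (r + s * (n - r - s)) + int s * sum_list (map fst (take r ds))))
             (m (r + 1 + (n - r - s))
                (take r as @ [m s (take s (drop r as))] @ drop (r + s) as))) = 0)"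

definition strictly_unital :: "(nat \<Rightarrow> 'v::zero list \<Rightarrow> 'v) \<Rightarrow> 'v \<Rightarrow> bool" where
  "strictly_unital m u \<longleftrightarrow>
     (\<forall>a. m 2 [u, a] = a \<and> m 2 [a, u] = a) \<and>
     (\<forall>n as. n \<ge> 1 \<and> n \<noteq> 2 \<and> length as = n \<and> u \<in> set as \<longrightarrow> m n as = 0)"

definition Ecol :: "('k::field \<Rightarrow> 'v::ab_group_add \<Rightarrow> 'v) \<Rightarrow> (int \<Rightarrow> int \<Rightarrow> 'v set) \<Rightarrow> int \<Rightarrow> 'v set" where
  "Ecol scale Egr i = module.span scale (\<Union>p. Egr p i)"

definition Adams_connected :: "('k::field \<Rightarrow> 'v::ab_group_add \<Rightarrow> 'v) \<Rightarrow> (int \<Rightarrow> int \<Rightarrow> 'v set) \<Rightarrow> bool" where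
  "Adams_connected scale Egr \<longleftrightarrow>
     (\<exists>w. w \<noteq> 0 \<and> Ecol scale Egr 0 = module.span scale {w}) \<and>
     ((\<forall>i < 0. Ecol scale Egr i = {0}) \<or> (\<forall>i > 0. Ecol scale Egr i = {0})) \<and>
     (\<forall>i. \<exists>B. finite B \<and> Ecol scale Egr i \<subseteq> module.span scale B)"

definition concentrated_in :: "(int \<Rightarrow> int \<Rightarrow> 'v::zero set) \<Rightarrow> (int \<times> int) set \<Rightarrow> bool" where
  "concentrated_in Egr S \<longleftrightarrow> (\<forall>p i. (p, i) \<notin> S \<longrightarrow> Egr p i = {0})"

end

theory Submission
  imports Defs
begin

text \<open>Since m n has bidegree (2 - n, 0), on homogeneous inputs of bidegrees ds it lands in
  bidegree (sum of the p's + 2 - n, sum of the i's). If a weight a p + b i is at most c on the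
  support S, it is at most c n + a (2 - n) on that output bidegree, which for the excluded n lies
  strictly below its values on S: take 3 p + 2 i in case (a), p + i in case (b), and
  p + i and -p - i in case (c); the remaining case n = 1 of (a) and (b) is a direct check.
  By multilinearity, and since E is spanned by its homogeneous elements, vanishing on
  homogeneous inputs suffices.\<close>

lemma multilinear_eq_0_on_spanning_set:
  assumes lin: "\<And>bs j. length bs = n \<Longrightarrow> j < n \<Longrightarrow>
      Vector_Spaces.linear scale scale (\<lambda>x. f (bs[j := x]))"
    and spanning: "module.span scale G = UNIV"
    and gen: "\<And>bs. length bs = n \<Longrightarrow> set bs \<subseteq> G \<Longrightarrow> f bs = 0"
    and "length as = n"
  shows "f as = 0"
proof -
  have "f bs = 0" if "k \<le> n" "length bs = n" "set (drop k bs) \<subseteq> G" for k bs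
    using that
  proof (induction k arbitrary: bs)
    case 0
    then show ?case by (simp add: gen)
  next
    case (Suc k)
    interpret L: Vector_Spaces.linear scale scale "\<lambda>x. f (bs[k := x])"
      using lin Suc.prems by simp
    have "drop k (bs[k := x]) = x # drop (Suc k) bs" for x
      using Suc.prems by (simp add: drop_update_swap Cons_nth_drop_Suc[symmetric])
    then have "f (bs[k := x]) = 0" if "x \<in> G" for x
      using Suc.IH[of "bs[k := x]"] Suc.prems that by simp
    then have "f (bs[k := bs ! k]) = 0"
      by (rule L.eq_0_on_span) (use spanning in auto)
    then show ?case by simp
  qed
  from this[of n as] assms(4) show ?thesis by simp
qed

lemma span_support_homogeneous_eq_UNIV:
  assumes "bigraded_vs scale Egr" "concentrated_in Egr S"
  shows "module.span scale (\<Union>(p, i)\<in>S. Egr p i) = UNIV"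
proof -
  interpret vector_space scale
    using assms(1) by (simp add: bigraded_vs_def)
  have "v \<in> span (\<Union>(p, i)\<in>S. Egr p i)" for v
  proof -
    obtain c :: "int \<times> int \<Rightarrow> 'b"
      where c: "\<forall>d. c d \<in> Egr (fst d) (snd d)" "v = sum c {d. c d \<noteq> 0}"
      using assms(1) unfolding bigraded_vs_def by metis
    have "c d \<in> span (\<Union>(p, i)\<in>S. Egr p i)" for d
    proof (cases "d \<in> S")
      case True
      with c(1) show ?thesis by (intro span_base UN_I[of d]) (auto split: prod.split)
    next
      case False
      with c(1) assms(2) have "c d = 0"
        unfolding concentrated_in_def by (metis prod.collapse singletonD)
      then show ?thesis by (simp add: span_zero)
    qed
    then show ?thesis
      unfolding c(2) by (intro span_sum)
  qed
  then show ?thesis by blast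
qed

lemma homog_degrees_exist:
  assumes "set bs \<subseteq> (\<Union>(p, i)\<in>S. Egr p i)"
  shows "\<exists>ds. homog Egr ds bs \<and> set ds \<subseteq> S"
  using assms
proof (induction bs)
  case Nil
  then show ?case by (simp add: homog_def)
next
  case (Cons b bs)
  then obtain d ds where "d \<in> S" "b \<in> Egr (fst d) (snd d)" "homog Egr ds bs" "set ds \<subseteq> S"
    by force
  then have "homog Egr (d # ds) (b # bs) \<and> set (d # ds) \<subseteq> S"
    by (auto simp: homog_def nth_Cons split: nat.split)
  then show ?case by blast
qed

definition operation_bidegree :: "(int \<times> int) list \<Rightarrow> int \<times> int" where
  "operation_bidegree ds = (sum_list (map fst ds) + 2 - int (length ds), sum_list (map snd ds))"

lemma operation_bidegree_single [simp]: "operation_bidegree [d] = (fst d + 1, snd d)"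
  by (simp add: operation_bidegree_def)

lemma Ainf_operation_vanishes_by_bidegree:
  assumes A: "Ainf_algebra scale Egr m" and C: "concentrated_in Egr S"
    and "n \<ge> 1" "length as = n"
    and escape: "\<And>ds. length ds = n \<Longrightarrow> set ds \<subseteq> S \<Longrightarrow> operation_bidegree ds \<notin> S"
  shows "m n as = 0"
proof (rule multilinear_eq_0_on_spanning_set[where G = "\<Union>(p, i)\<in>S. Egr p i"])
  show "Vector_Spaces.linear scale scale (\<lambda>x. m n (bs[j := x]))"
    if "length bs = n" "j < n" for bs j
    using A \<open>n \<ge> 1\<close> that unfolding Ainf_algebra_def by blast
  show "module.span scale (\<Union>(p, i)\<in>S. Egr p i) = UNIV"
    using A C by (intro span_support_homogeneous_eq_UNIV) (simp_all add: Ainf_algebra_def)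
  show "m n bs = 0" if bs: "length bs = n" "set bs \<subseteq> (\<Union>(p, i)\<in>S. Egr p i)" for bs
  proof -
    obtain ds where ds: "homog Egr ds bs" "set ds \<subseteq> S"
      using homog_degrees_exist[OF bs(2)] by blast
    then have "length ds = n"
      using bs(1) by (simp add: homog_def)
    then have "Egr (fst (operation_bidegree ds)) (snd (operation_bidegree ds)) = {0}"
      using C escape ds(2) unfolding concentrated_in_def by simp
    moreover have "m n bs \<in> Egr (fst (operation_bidegree ds)) (snd (operation_bidegree ds))"
      using A \<open>n \<ge> 1\<close> ds(1) bs(1) \<open>length ds = n\<close>
      unfolding Ainf_algebra_def operation_bidegree_def by simp
    ultimately show ?thesis by blast
  qed
qed (fact \<open>length as = n\<close>)

lemma operation_bidegree_notin_by_weight: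
  fixes a b c :: int
  assumes "set ds \<subseteq> S"
    and bound: "\<And>p i. (p, i) \<in> S \<Longrightarrow> a * p + b * i \<le> c"
    and below: "\<And>p i. (p, i) \<in> S \<Longrightarrow>
      c * int (length ds) + a * (2 - int (length ds)) < a * p + b * i"
  shows "operation_bidegree ds \<notin> S"
proof
  assume out: "operation_bidegree ds \<in> S"
  have "a * sum_list (map fst ds) + b * sum_list (map snd ds) = (\<Sum>d\<leftarrow>ds. a * fst d + b * snd d)"
    by (simp add: sum_list_addf sum_list_const_mult)
  also have "\<dots> \<le> (\<Sum>d\<leftarrow>ds. c)"
    using assms(1) bound by (intro sum_list_mono) auto
  also have "\<dots> = c * int (length ds)"
    by (simp add: sum_list_triv)
  finally show False
    using below[OF out[unfolded operation_bidegree_def]] by (simp add: algebra_simps)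
qed

lemma operation_bidegree_escapes_case_a:
  assumes "set ds \<subseteq> {(0,0), (1,-1), (2,-3), (2,-4), (3,-6), (4,-7)}"
    and "length ds \<ge> 1" "length ds \<notin> {2,3,4}"
  shows "operation_bidegree ds \<notin> {(0,0), (1,-1), (2,-3), (2,-4), (3,-6), (4,-7)}"
proof (cases "length ds = 1")
  case True
  then obtain d where "ds = [d]" by (auto simp: length_Suc_conv)
  with assms(1) show ?thesis by auto
next
  case False
  with assms show ?thesis
    by (intro operation_bidegree_notin_by_weight[where a = 3 and b = 2 and c = 1]) auto
qed

lemma operation_bidegree_escapes_case_b:
  assumes "set ds \<subseteq> {(0,0), (1,-1), (2,-2), (2,-3), (3,-4), (4,-5)}"
    and "length ds \<ge> 1" "length ds \<notin> {2,3}"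
  shows "operation_bidegree ds \<notin> {(0,0), (1,-1), (2,-2), (2,-3), (3,-4), (4,-5)}"
proof (cases "length ds = 1")
  case True
  then obtain d where "ds = [d]" by (auto simp: length_Suc_conv)
  with assms(1) show ?thesis by auto
next
  case False
  with assms show ?thesis
    by (intro operation_bidegree_notin_by_weight[where a = 1 and b = 1 and c = 0]) auto
qed

lemma operation_bidegree_escapes_case_c:
  assumes "set ds \<subseteq> {(0,0), (1,-1), (2,-2), (3,-3), (4,-4)}"
    and "length ds \<ge> 1" "length ds \<noteq> 2"
  shows "operation_bidegree ds \<notin> {(0,0), (1,-1), (2,-2), (3,-3), (4,-4)}"
proof (cases "length ds = 1")
  case True
  with assms show ?thesis
    by (intro operation_bidegree_notin_by_weight[where a = "-1" and b = "-1" and c = 0]) auto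
next
  case False
  with assms show ?thesis
    by (intro operation_bidegree_notin_by_weight[where a = 1 and b = 1 and c = 0]) auto
qed

theorem lemma3p2:
  fixes scale :: "'k::field \<Rightarrow> 'v::ab_group_add \<Rightarrow> 'v"
    and Egr :: "int \<Rightarrow> int \<Rightarrow> 'v set"
    and m :: "nat \<Rightarrow> 'v list \<Rightarrow> 'v"
    and u :: 'v
  assumes "Ainf_algebra scale Egr m"
    and "strictly_unital m u"
    and "Adams_connected scale Egr"
    and "u \<noteq> 0"
    and "Egr 0 0 = module.span scale {u}"
  shows "(concentrated_in Egr {(0,0), (1,-1), (2,-3), (2,-4), (3,-6), (4,-7)} \<longrightarrow>
            (\<forall>n as. n \<ge> 1 \<and> n \<notin> {2,3,4} \<and> length as = n \<longrightarrow> m n as = 0)) \<and>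
         (concentrated_in Egr {(0,0), (1,-1), (2,-2), (2,-3), (3,-4), (4,-5)} \<longrightarrow>
            (\<forall>n as. n \<ge> 1 \<and> n \<notin> {2,3} \<and> length as = n \<longrightarrow> m n as = 0)) \<and>
         (concentrated_in Egr {(0,0), (1,-1), (2,-2), (3,-3), (4,-4)} \<longrightarrow>
            (\<forall>n as. n \<ge> 1 \<and> n \<noteq> 2 \<and> length as = n \<longrightarrow> m n as = 0))"
proof (intro conjI impI allI; elim conjE)
  fix n as
  show "m n as = 0"
    if "concentrated_in Egr {(0,0), (1,-1), (2,-3), (2,-4), (3,-6), (4,-7)}"
      "n \<ge> 1" "n \<notin> {2,3,4}" "length as = n"
    using that by (intro Ainf_operation_vanishes_by_bidegree[OF assms(1)])
      (auto dest: operation_bidegree_escapes_case_a)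
  show "m n as = 0"
    if "concentrated_in Egr {(0,0), (1,-1), (2,-2), (2,-3), (3,-4), (4,-5)}"
      "n \<ge> 1" "n \<notin> {2,3}" "length as = n"
    using that by (intro Ainf_operation_vanishes_by_bidegree[OF assms(1)])
      (auto dest: operation_bidegree_escapes_case_b)
  show "m n as = 0"
    if "concentrated_in Egr {(0,0), (1,-1), (2,-2), (3,-3), (4,-4)}"
      "n \<ge> 1" "n \<noteq> 2" "length as = n"
    using that by (intro Ainf_operation_vanishes_by_bidegree[OF assms(1)])
      (auto dest: operation_bidegree_escapes_case_c)
qed

end
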